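(* Let $\alpha>0$, $y_0\in\mathrm{dom}\, h$, $\{x_i\}_{i=0}^{k-1}\subseteq\mathrm{dom}\, h$ and $\zeta\in[0,1]^k$, and let $\Gamma_k$ be the ACP model induced by $(y_0,\{x_i\}_{i=0}^{k-1},\zeta)$. Then: (a) $\Gamma_k(x)\leq\phi^\alpha(x)$ for all $x\in\mathrm{dom}\, h$; (b) $\Gamma_k$ is $\alpha$-strongly convex. Furthermore, define $s_0=\nabla f(y_0)$ and $s_{j+1}=(1-\zeta_j)s_j+\zeta_j\nabla f(x_j)$ for $0\leq j\leq k-1$. Then (c) for all $u\in\mathrm{dom}\, h$, $\phi^\alpha(u)+\psi^\alpha(s_k)\leq \phi^\alpha(u)-\min_{x\in\mathbb{R}^n}\Gamma_k(x)$.
   Context: Let $\|\cdot\|$ be a norm on $\mathbb{R}^n$ with dual norm $\|\cdot\|_*$. Let $f:\mathbb{R}^n\to\mathbb{R}$ be convex, differentiable and $L$-smooth ($L>0$) with respect to $\|\cdot\|$, $h:\mathbb{R}^n\to(-\infty,\infty]$ closed proper convex with bounded domain, and $w:\mathbb{R}^n\to[0,+\infty]$ closed, $1$-strongly convex with respect to $\|\cdot\|$ on $\mathrm{dom}\, h$, with $\max_{\mathrm{dom}\, h}w<\infty$. For $\alpha>0$ let $h^\alpha=h+\alpha w$, $\phi^\alpha=f+h^\alpha$, $\psi^\alpha(z)=(h^\alpha)^*(-z)+f^*(z)$ ($^*$ = convex conjugate). Write $\ell_f(x;x_0)=f(x_0)+\langle\nabla f(x_0),x-x_0\rangle$. The ACP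 (aggregated cutting plane) model induced by $(y_0,\{x_i\}_{i=0}^{k-1},\zeta)$ is $\Gamma_k$ defined recursively by $\Gamma_0(x)=h^\alpha(x)+\ell_f(x;y_0)$ and $\Gamma_{j+1}(x)=(1-\zeta_j)\Gamma_j(x)+\zeta_j(h^\alpha(x)+\ell_f(x;x_j))$ for $0\le j\le k-1$. *)

theory Defs
  imports "HOL-Analysis.Analysis"
begin

text \<open>Extended-real-valued functions on a Euclidean space model functions into
  (-inf, +inf]. The space R^n is an arbitrary Euclidean space type 'a, with its
  standard inner product as dual pairing; the norm of the paper is an arbitrary
  norm N on 'a (not necessarily the Euclidean one).\<close>

definition is_norm :: "('a::real_vector \<Rightarrow> real) \<Rightarrow> bool" where
  "is_norm N \<longleftrightarrow> (\<forall>x. N x \<ge> 0) \<and> (\<forall>x. N x = 0 \<longleftrightarrow> x = 0)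
     \<and> (\<forall>c x. N (c *\<^sub>R x) = \<bar>c\<bar> * N x) \<and> (\<forall>x y. N (x + y) \<le> N x + N y)"

definition dual_norm :: "('a::real_inner \<Rightarrow> real) \<Rightarrow> 'a \<Rightarrow> real" where
  "dual_norm N s = Sup {inner s x | x. N x \<le> 1}"

definition edom :: "('a \<Rightarrow> ereal) \<Rightarrow> 'a set" where
  "edom F = {x. F x < \<infinity>}"

definition proper_fun :: "('a \<Rightarrow> ereal) \<Rightarrow> bool" where
  "proper_fun F \<longleftrightarrow> (\<forall>x. F x > -\<infinity>) \<and> (\<exists>x. F x < \<infinity>)"

definition convex_fun :: "('a::real_vector \<Rightarrow> ereal) \<Rightarrow> bool" where
  "convex_fun F \<longleftrightarrow> (\<forall>x y t. 0 \<le> t \<and> t \<le> 1 \<longrightarrow>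
     F (t *\<^sub>R x + (1 - t) *\<^sub>R y) \<le> ereal t * F x + ereal (1 - t) * F y)"

text \<open>Closed (= lower semicontinuous = closed epigraph): all sublevel sets closed.\<close>
definition closed_fun :: "('a::topological_space \<Rightarrow> ereal) \<Rightarrow> bool" where
  "closed_fun F \<longleftrightarrow> (\<forall>c::real. closed {x. F x \<le> ereal c})"

definition strongly_convex_on ::
    "'a::real_vector set \<Rightarrow> ('a \<Rightarrow> real) \<Rightarrow> real \<Rightarrow> ('a \<Rightarrow> ereal) \<Rightarrow> bool" where
  "strongly_convex_on S N mu F \<longleftrightarrow> (\<forall>x\<in>S. \<forall>y\<in>S. \<forall>t. 0 < t \<and> t < 1 \<longrightarrow>
     F (t *\<^sub>R x + (1 - t) *\<^sub>R y)
       \<le> ereal t * F x + ereal (1 - t) * F y - ereal (mu / 2 * t * (1 - t) * (N (x - y))\<^sup>2))"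

definition L_smooth :: "('a::real_inner \<Rightarrow> real) \<Rightarrow> real \<Rightarrow> ('a \<Rightarrow> 'a) \<Rightarrow> bool" where
  "L_smooth N L g \<longleftrightarrow> (\<forall>x y. dual_norm N (g x - g y) \<le> L * N (x - y))"

definition conj :: "('a::real_inner \<Rightarrow> ereal) \<Rightarrow> 'a \<Rightarrow> ereal" where
  "conj F z = (SUP x. ereal (inner z x) - F x)"

definition lin_f :: "('a::real_inner \<Rightarrow> real) \<Rightarrow> ('a \<Rightarrow> 'a) \<Rightarrow> 'a \<Rightarrow> 'a \<Rightarrow> real" where
  "lin_f f g x0 x = f x0 + inner (g x0) (x - x0)"

definition h_alpha :: "('a \<Rightarrow> ereal) \<Rightarrow> ('a \<Rightarrow> ereal) \<Rightarrow> real \<Rightarrow> 'a \<Rightarrow> ereal" where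
  "h_alpha h w \<alpha> x = h x + ereal \<alpha> * w x"

definition phi_alpha :: "('a \<Rightarrow> real) \<Rightarrow> ('a \<Rightarrow> ereal) \<Rightarrow> ('a \<Rightarrow> ereal) \<Rightarrow> real \<Rightarrow> 'a \<Rightarrow> ereal" where
  "phi_alpha f h w \<alpha> x = ereal (f x) + h_alpha h w \<alpha> x"

definition psi_alpha :: "('a::real_inner \<Rightarrow> real) \<Rightarrow> ('a \<Rightarrow> ereal) \<Rightarrow> ('a \<Rightarrow> ereal) \<Rightarrow> real \<Rightarrow> 'a \<Rightarrow> ereal" where
  "psi_alpha f h w \<alpha> z = conj (h_alpha h w \<alpha>) (- z) + conj (\<lambda>x. ereal (f x)) z"

primrec acp :: "('a::real_inner \<Rightarrow> real) \<Rightarrow> ('a \<Rightarrow> 'a) \<Rightarrow> ('a \<Rightarrow> ereal) \<Rightarrow> ('a \<Rightarrow> ereal) \<Rightarrow> real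
    \<Rightarrow> 'a \<Rightarrow> (nat \<Rightarrow> 'a) \<Rightarrow> (nat \<Rightarrow> real) \<Rightarrow> nat \<Rightarrow> 'a \<Rightarrow> ereal" where
  "acp f g h w \<alpha> y0 xs \<zeta> 0 x = h_alpha h w \<alpha> x + ereal (lin_f f g y0 x)"
| "acp f g h w \<alpha> y0 xs \<zeta> (Suc j) x =
     ereal (1 - \<zeta> j) * acp f g h w \<alpha> y0 xs \<zeta> j x
     + ereal (\<zeta> j) * (h_alpha h w \<alpha> x + ereal (lin_f f g (xs j) x))"

primrec agg_grad :: "('a::real_vector \<Rightarrow> 'a) \<Rightarrow> 'a \<Rightarrow> (nat \<Rightarrow> 'a) \<Rightarrow> (nat \<Rightarrow> real) \<Rightarrow> nat \<Rightarrow> 'a" where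
  "agg_grad g y0 xs \<zeta> 0 = g y0"
| "agg_grad g y0 xs \<zeta> (Suc j) = (1 - \<zeta> j) *\<^sub>R agg_grad g y0 xs \<zeta> j + \<zeta> j *\<^sub>R g (xs j)"

end

theory Submission
  imports Defs
begin

text \<open>Each cut \<open>\<ell>_f(\<cdot>; x\<^sub>j)\<close> is an affine minorant of the convex function \<open>f\<close>, and
  \<open>\<Gamma>\<^sub>k\<close> is \<open>h\<^sup>\<alpha>\<close> plus a convex combination of such cuts, i.e. \<open>h\<^sup>\<alpha> + c + \<langle>s\<^sub>k, \<cdot>\<rangle>\<close>
  with the aggregated gradient \<open>s\<^sub>k\<close> as slope. Hence \<open>\<Gamma>\<^sub>k \<le> \<phi>\<^sup>\<alpha>\<close>, \<open>\<Gamma>\<^sub>k\<close> inherits the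
  \<open>\<alpha>\<close>-strong convexity of \<open>h\<^sup>\<alpha>\<close>, and the two conjugates split accordingly:
  \<open>f\<^sup>*(s\<^sub>k) \<le> -c\<close> because \<open>c + \<langle>s\<^sub>k, \<cdot>\<rangle> \<le> f\<close>, while \<open>(h\<^sup>\<alpha>)\<^sup>*(-s\<^sub>k) \<le> c - inf \<Gamma>\<^sub>k\<close>
  directly from the definition; so \<open>\<psi>\<^sup>\<alpha>(s\<^sub>k) \<le> -inf \<Gamma>\<^sub>k\<close>.\<close>

lemma strongly_convex_on_UNIV_if_infinite_outside:
  assumes "strongly_convex_on S N \<mu> F"
    and "\<And>x. F x \<noteq> -\<infinity>" "\<And>x. x \<notin> S \<Longrightarrow> F x = \<infinity>"
  shows "strongly_convex_on UNIV N \<mu> F"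
  unfolding strongly_convex_on_def
proof (intro ballI allI impI)
  fix x y and t :: real
  assume t: "0 < t \<and> t < 1"
  show "F (t *\<^sub>R x + (1 - t) *\<^sub>R y)
      \<le> ereal t * F x + ereal (1 - t) * F y - ereal (\<mu> / 2 * t * (1 - t) * (N (x - y))\<^sup>2)"
  proof (cases "x \<in> S \<and> y \<in> S")
    case True
    then show ?thesis using assms(1) t unfolding strongly_convex_on_def by blast
  next
    case False
    then have "ereal t * F x + ereal (1 - t) * F y = \<infinity>"
      using assms(2,3)[of x] assms(2,3)[of y] t by (cases "F x"; cases "F y") auto
    then show ?thesis by (simp only: ereal_minus(4) ereal_less_eq(1))
  qed
qed

lemma strongly_convex_on_add_affine:
  assumes not_minf: "\<And>x. F x \<noteq> -\<infinity>" and sc: "strongly_convex_on S N \<mu> F"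
  shows "strongly_convex_on S N \<mu> (\<lambda>x. F x + ereal (c + inner a x))"
  unfolding strongly_convex_on_def
proof (intro ballI allI impI)
  fix x y and t :: real
  assume x: "x \<in> S" and y: "y \<in> S" and t: "0 < t \<and> t < 1"
  define z where "z = t *\<^sub>R x + (1 - t) *\<^sub>R y"
  define q where "q = \<mu> / 2 * t * (1 - t) * (N (x - y))\<^sup>2"
  have affine: "c + inner a z = t * (c + inner a x) + (1 - t) * (c + inner a y)"
    unfolding z_def by (simp add: inner_add_right algebra_simps)
  have "F z \<le> ereal t * F x + ereal (1 - t) * F y - ereal q"
    using sc x y t unfolding strongly_convex_on_def z_def q_def by blast
  then show "F z + ereal (c + inner a z)
      \<le> ereal t * (F x + ereal (c + inner a x)) + ereal (1 - t) * (F y + ereal (c + inner a y))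
        - ereal q"
    using not_minf[of x] not_minf[of y] not_minf[of z] t unfolding affine
    by (cases "F x"; cases "F y"; cases "F z") (auto simp: algebra_simps)
qed

lemma conj_le_of_affine_minorant:
  assumes "\<And>x. ereal (c + inner s x) \<le> F x"
  shows "conj F s \<le> ereal (- c)"
  unfolding conj_def
proof (rule SUP_least)
  fix x
  show "ereal (inner s x) - F x \<le> ereal (- c)"
    using assms[of x] by (cases "F x") auto
qed

lemma conj_uminus_le_minus_Inf:
  assumes "\<And>x. H x \<noteq> -\<infinity>"
  shows "conj H (- s) \<le> ereal c - (INF x. H x + ereal (c + inner s x))"
  unfolding conj_def
proof (rule SUP_least)
  fix y
  have "ereal (inner (- s) y) - H y = ereal c - (H y + ereal (c + inner s y))"
    using assms[of y] by (cases "H y") auto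
  also have "\<dots> \<le> ereal c - (INF x. H x + ereal (c + inner s x))"
    by (intro ereal_minus_mono order_refl INF_lower) simp
  finally show "ereal (inner (- s) y) - H y \<le> ereal c - (INF x. H x + ereal (c + inner s x))" .
qed

lemma psi_alpha_le_minus_Inf:
  assumes "\<And>x. h_alpha h w \<alpha> x \<noteq> -\<infinity>" "\<And>x. c + inner s x \<le> f x"
  shows "psi_alpha f h w \<alpha> s \<le> - (INF x. h_alpha h w \<alpha> x + ereal (c + inner s x))"
proof -
  let ?m = "INF x. h_alpha h w \<alpha> x + ereal (c + inner s x)"
  have "psi_alpha f h w \<alpha> s \<le> (ereal c - ?m) + ereal (- c)"
    unfolding psi_alpha_def
    using assms by (intro add_mono conj_uminus_le_minus_Inf conj_le_of_affine_minorant) auto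
  also have "\<dots> = - ?m"
    by (cases ?m) auto
  finally show ?thesis .
qed

lemma lin_f_le_convex:
  fixes f :: "'a::real_inner \<Rightarrow> real"
  assumes f_grad: "\<And>x. (f has_derivative (\<lambda>v. inner (g x) v)) (at x)"
    and f_convex: "convex_on UNIV f"
  shows "lin_f f g z x \<le> f x"
proof -
  define p where "p = (\<lambda>t::real. f (z + t *\<^sub>R (x - z)))"
  have "convex_on UNIV p"
  proof (rule convex_onI)
    fix t a b :: real assume t: "0 < t" "t < 1"
    have "z + ((1 - t) *\<^sub>R a + t *\<^sub>R b) *\<^sub>R (x - z)
        = (1 - t) *\<^sub>R (z + a *\<^sub>R (x - z)) + t *\<^sub>R (z + b *\<^sub>R (x - z))"
      by (simp add: algebra_simps)
    then show "p ((1 - t) *\<^sub>R a + t *\<^sub>R b) \<le> (1 - t) * p a + t * p b"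
      unfolding p_def using convex_onD[OF f_convex, of t] t by simp
  qed simp
  moreover have "(p has_field_derivative inner (g z) (x - z)) (at 0)"
  proof -
    have "((\<lambda>t::real. z + t *\<^sub>R (x - z)) has_derivative (\<lambda>t. t *\<^sub>R (x - z))) (at 0)"
      by (auto intro!: derivative_eq_intros)
    from has_derivative_compose[OF this f_grad[of "z + 0 *\<^sub>R (x - z)"]]
    have "(p has_derivative (\<lambda>t. inner (g z) (t *\<^sub>R (x - z)))) (at 0)"
      by (simp add: p_def o_def)
    then show ?thesis
      by (simp add: has_field_derivative_def mult.commute[of _ "g z \<bullet> (x - z)"])
  qed
  ultimately have "p 1 - p 0 \<ge> inner (g z) (x - z) * (1 - 0)"
    by (intro convex_on_imp_above_tangent) auto
  then show ?thesis by (simp add: p_def lin_f_def)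
qed

primrec agg_lin :: "('a::real_inner \<Rightarrow> real) \<Rightarrow> ('a \<Rightarrow> 'a) \<Rightarrow> 'a \<Rightarrow> (nat \<Rightarrow> 'a)
    \<Rightarrow> (nat \<Rightarrow> real) \<Rightarrow> nat \<Rightarrow> 'a \<Rightarrow> real" where
  "agg_lin f g y0 xs \<zeta> 0 x = lin_f f g y0 x"
| "agg_lin f g y0 xs \<zeta> (Suc j) x = (1 - \<zeta> j) * agg_lin f g y0 xs \<zeta> j x + \<zeta> j * lin_f f g (xs j) x"

lemma agg_lin_affine:
  "agg_lin f g y0 xs \<zeta> k x = agg_lin f g y0 xs \<zeta> k 0 + inner (agg_grad g y0 xs \<zeta> k) x"
  by (induction k) (auto simp: lin_f_def algebra_simps inner_diff_right)

lemma agg_lin_le: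
  assumes lin_le: "\<And>z x. lin_f f g z x \<le> f x"
    and zeta: "\<And>i. i < k \<Longrightarrow> 0 \<le> \<zeta> i \<and> \<zeta> i \<le> 1"
  shows "agg_lin f g y0 xs \<zeta> k x \<le> f x"
  using zeta
proof (induction k)
  case 0
  then show ?case by (simp add: lin_le)
next
  case (Suc k)
  then show ?case by (auto intro!: convex_bound_le lin_le)
qed

lemma ereal_convex_comb_add_real:
  assumes "0 \<le> c" "c \<le> 1" "H \<noteq> -\<infinity>"
  shows "ereal (1 - c) * (H + ereal a) + ereal c * (H + ereal b) = H + ereal ((1 - c) * a + c * b)"
proof (cases H)
  case PInf
  then show ?thesis using assms by (cases "c = 0"; cases "c = 1") auto
qed (use assms in \<open>auto simp: algebra_simps\<close>)

lemma acp_eq_h_alpha_plus_affine: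
  assumes zeta: "\<And>i. i < k \<Longrightarrow> 0 \<le> \<zeta> i \<and> \<zeta> i \<le> 1"
    and H: "\<And>x. h_alpha h w \<alpha> x \<noteq> -\<infinity>"
  shows "acp f g h w \<alpha> y0 xs \<zeta> k = (\<lambda>x. h_alpha h w \<alpha> x
           + ereal (agg_lin f g y0 xs \<zeta> k 0 + inner (agg_grad g y0 xs \<zeta> k) x))"
proof
  fix x
  have "acp f g h w \<alpha> y0 xs \<zeta> k x = h_alpha h w \<alpha> x + ereal (agg_lin f g y0 xs \<zeta> k x)"
    using zeta by (induction k) (simp_all add: ereal_convex_comb_add_real H)
  then show "acp f g h w \<alpha> y0 xs \<zeta> k x = h_alpha h w \<alpha> x
      + ereal (agg_lin f g y0 xs \<zeta> k 0 + inner (agg_grad g y0 xs \<zeta> k) x)"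
    using agg_lin_affine[of f g y0 xs \<zeta> k x] by simp
qed

lemma h_alpha_not_minf:
  assumes "proper_fun h" "w x \<ge> 0" "\<alpha> \<ge> 0"
  shows "h_alpha h w \<alpha> x \<noteq> -\<infinity>"
  using assms by (cases "h x"; cases "w x") (auto simp: h_alpha_def proper_fun_def)

lemma h_alpha_outside_edom:
  assumes "x \<notin> edom h" "w x \<ge> 0" "\<alpha> \<ge> 0"
  shows "h_alpha h w \<alpha> x = \<infinity>"
  using assms by (cases "w x") (auto simp: h_alpha_def edom_def)

lemma strongly_convex_on_h_alpha:
  assumes h_proper: "proper_fun h" and h_convex: "convex_fun h"
    and w_nonneg: "\<And>x. w x \<ge> 0" and w_finite: "\<And>x. x \<in> edom h \<Longrightarrow> w x < \<infinity>"
    and w_sc: "strongly_convex_on (edom h) N 1 w"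
    and alpha: "\<alpha> \<ge> 0"
  shows "strongly_convex_on (edom h) N \<alpha> (h_alpha h w \<alpha>)"
  unfolding strongly_convex_on_def
proof (intro ballI allI impI)
  have real_on_edom: "\<exists>a b. h x = ereal a \<and> w x = ereal b" if "x \<in> edom h" for x
    using that h_proper w_nonneg[of x] w_finite[of x]
    by (cases "h x"; cases "w x") (auto simp: edom_def proper_fun_def)
  fix x y and t :: real
  assume x: "x \<in> edom h" and y: "y \<in> edom h" and t: "0 < t \<and> t < 1"
  obtain hx wx hy wy where hx: "h x = ereal hx" "w x = ereal wx"
    and hy: "h y = ereal hy" "w y = ereal wy"
    using real_on_edom x y by blast
  define z where "z = t *\<^sub>R x + (1 - t) *\<^sub>R y"
  have "h z \<le> ereal t * h x + ereal (1 - t) * h y"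
    using h_convex t unfolding convex_fun_def z_def by simp
  then have "h z \<le> ereal (t * hx + (1 - t) * hy)"
    using hx hy by simp
  moreover from this have "z \<in> edom h"
    unfolding edom_def by (auto intro: le_less_trans)
  then obtain hz wz where hz: "h z = ereal hz" "w z = ereal wz"
    using real_on_edom by blast
  ultimately have "hz \<le> t * hx + (1 - t) * hy"
    by simp
  moreover have "wz \<le> t * wx + (1 - t) * wy - 1 / 2 * t * (1 - t) * (N (x - y))\<^sup>2"
    using w_sc x y t hx hy hz unfolding strongly_convex_on_def z_def by force
  then have "\<alpha> * wz \<le> \<alpha> * (t * wx + (1 - t) * wy - 1 / 2 * t * (1 - t) * (N (x - y))\<^sup>2)"
    using alpha by (rule mult_left_mono)
  ultimately show "h_alpha h w \<alpha> (t *\<^sub>R x + (1 - t) *\<^sub>R y)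
      \<le> ereal t * h_alpha h w \<alpha> x + ereal (1 - t) * h_alpha h w \<alpha> y
        - ereal (\<alpha> / 2 * t * (1 - t) * (N (x - y))\<^sup>2)"
    using hx hy hz unfolding z_def[symmetric] by (simp add: h_alpha_def algebra_simps)
qed

lemma strongly_convex_on_UNIV_h_alpha:
  assumes h_proper: "proper_fun h" and h_convex: "convex_fun h"
    and w_nonneg: "\<And>x. w x \<ge> 0" and w_finite: "\<And>x. x \<in> edom h \<Longrightarrow> w x < \<infinity>"
    and w_sc: "strongly_convex_on (edom h) N 1 w"
    and alpha: "\<alpha> \<ge> 0"
  shows "strongly_convex_on UNIV N \<alpha> (h_alpha h w \<alpha>)"
proof (rule strongly_convex_on_UNIV_if_infinite_outside)
  show "strongly_convex_on (edom h) N \<alpha> (h_alpha h w \<alpha>)"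
    by (rule strongly_convex_on_h_alpha[OF h_proper h_convex w_nonneg w_finite w_sc alpha])
qed (simp_all add: h_alpha_not_minf h_alpha_outside_edom assms)

theorem lemma2p3:
  fixes N :: "'a::euclidean_space \<Rightarrow> real"
    and f :: "'a \<Rightarrow> real" and g :: "'a \<Rightarrow> 'a" and L :: real
    and h w :: "'a \<Rightarrow> ereal" and \<alpha> :: real
    and y0 :: 'a and xs :: "nat \<Rightarrow> 'a" and \<zeta> :: "nat \<Rightarrow> real" and k :: nat
  assumes norm: "is_norm N"
    and f_grad: "\<And>x. (f has_derivative (\<lambda>v. inner (g x) v)) (at x)"
    and f_convex: "convex_on UNIV f"
    and L_pos: "L > 0"
    and f_smooth: "L_smooth N L g"
    and h_closed: "closed_fun h" and h_proper: "proper_fun h" and h_convex: "convex_fun h"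
    and h_bdd: "bounded (edom h)"
    and w_nonneg: "\<And>x. w x \<ge> 0"
    and w_closed: "closed_fun w"
    and w_sc: "strongly_convex_on (edom h) N 1 w"
    and w_max: "\<exists>M::real. \<forall>x\<in>edom h. w x \<le> ereal M"
    and alpha_pos: "\<alpha> > 0"
    and y0_dom: "y0 \<in> edom h"
    and xs_dom: "\<And>i. i < k \<Longrightarrow> xs i \<in> edom h"
    and zeta: "\<And>i. i < k \<Longrightarrow> 0 \<le> \<zeta> i \<and> \<zeta> i \<le> 1"
  shows "(\<forall>x\<in>edom h. acp f g h w \<alpha> y0 xs \<zeta> k x \<le> phi_alpha f h w \<alpha> x)
       \<and> strongly_convex_on UNIV N \<alpha> (acp f g h w \<alpha> y0 xs \<zeta> k)
       \<and> (\<forall>u\<in>edom h. phi_alpha f h w \<alpha> u + psi_alpha f h w \<alpha> (agg_grad g y0 xs \<zeta> k)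
            \<le> phi_alpha f h w \<alpha> u - (INF x. acp f g h w \<alpha> y0 xs \<zeta> k x))"
proof -
  define c where "c = agg_lin f g y0 xs \<zeta> k 0"
  define s where "s = agg_grad g y0 xs \<zeta> k"
  have alpha: "\<alpha> \<ge> 0" using alpha_pos by simp
  have H_not_minf: "\<And>x. h_alpha h w \<alpha> x \<noteq> -\<infinity>"
    using h_alpha_not_minf[OF h_proper w_nonneg alpha] .
  have cut_le: "c + inner s x \<le> f x" for x
    using agg_lin_le[OF lin_f_le_convex[OF f_grad f_convex], of k \<zeta> y0 xs x] zeta
      agg_lin_affine[of f g y0 xs \<zeta> k x]
    unfolding c_def s_def by simp
  have acp: "acp f g h w \<alpha> y0 xs \<zeta> k = (\<lambda>x. h_alpha h w \<alpha> x + ereal (c + inner s x))"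
    unfolding c_def s_def by (rule acp_eq_h_alpha_plus_affine[OF zeta H_not_minf])
  have "acp f g h w \<alpha> y0 xs \<zeta> k x \<le> phi_alpha f h w \<alpha> x" for x
    using cut_le[of x] unfolding acp phi_alpha_def
    by (subst add.commute) (rule add_left_mono, simp)
  moreover have "strongly_convex_on UNIV N \<alpha> (acp f g h w \<alpha> y0 xs \<zeta> k)"
    unfolding acp
    by (intro strongly_convex_on_add_affine[OF H_not_minf] strongly_convex_on_UNIV_h_alpha
        h_proper h_convex w_nonneg w_sc alpha) (use w_max in fastforce)
  moreover have "phi_alpha f h w \<alpha> u + psi_alpha f h w \<alpha> s
      \<le> phi_alpha f h w \<alpha> u - (INF x. acp f g h w \<alpha> y0 xs \<zeta> k x)" for u
    using psi_alpha_le_minus_Inf[OF H_not_minf cut_le]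
    unfolding acp minus_ereal_def by (rule add_left_mono)
  ultimately show ?thesis
    unfolding s_def by simp
qed

end
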